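(* Let $r,s$ be integers with $r\ge s\ge 1$, and define $$\textsc{MaxH}(r,s)=\begin{cases}0 & r\le 2s-1,\\ \dfrac{1}{2^r}\sum_{i=s}^{r}\binom{r}{i} & r\ge 2s.\end{cases}$$ For every $h>\textsc{MaxH}(r,s)$ there exists an instance with two groups of binary agents in which every agent desires exactly $r$ goods, and in which there is no allocation such that, in each group $A_i$, at least $h\cdot n_i$ agents receive (via their group's bundle) at least $s$ of their desired goods.
   Context: There is a finite set $G$ of goods and two groups $A_1,A_2$ of agents, with $n_i\ge 1$ agents in $A_i$. A binary agent has an additive utility with $u_a(\{g\})\in\{0,1\}$ for each good $g$; she desires $g$ iff $u_a(\{g\})=1$. An allocation is a partition $(G_1,G_2)$ of $G$; agents of $A_i$ receive the bundle $G_i$. *)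

theory Defs
  imports Complex_Main
begin

text \<open>Goods are natural numbers; an agent is given by her utility on single goods,
  u :: nat \<Rightarrow> nat, with u g = u_a({g}). Utilities are additive.\<close>

definition binary_agent :: "nat set \<Rightarrow> (nat \<Rightarrow> nat) \<Rightarrow> bool" where
  "binary_agent G u \<longleftrightarrow> (\<forall>g\<in>G. u g \<in> {0, 1})"

definition desired :: "nat set \<Rightarrow> (nat \<Rightarrow> nat) \<Rightarrow> nat set" where
  "desired G u = {g \<in> G. u g = 1}"

definition bundle_util :: "(nat \<Rightarrow> nat) \<Rightarrow> nat set \<Rightarrow> nat" where
  "bundle_util u B = (\<Sum>g\<in>B. u g)"

definition is_allocation :: "nat set \<Rightarrow> nat set \<Rightarrow> nat set \<Rightarrow> bool" where
  "is_allocation G G1 G2 \<longleftrightarrow> G1 \<union> G2 = G \<and> G1 \<inter> G2 = {}"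

text \<open>Number of agents of a group (a list, so agents may coincide in preferences)
  receiving at least s of their desired goods from bundle B.\<close>
definition num_sat :: "nat \<Rightarrow> (nat \<Rightarrow> nat) list \<Rightarrow> nat set \<Rightarrow> nat" where
  "num_sat s A B = length (filter (\<lambda>u. bundle_util u B \<ge> s) A)"

definition MaxH :: "nat \<Rightarrow> nat \<Rightarrow> real" where
  "MaxH r s = (if r \<le> 2 * s - 1 then 0
               else (\<Sum>i = s..r. real (r choose i)) / 2 ^ r)"

end

theory Submission imports Defs begin

text \<open>Take 2n goods and one agent for every r-subset of them, in both groups. In any allocation
  one group receives at most n goods, and the fraction of its agents finding at least s desired
  goods in an n-set is a hypergeometric tail, which tends to the binomial tail MaxH r s as
  n grows. When r < 2s a single agent desiring all r goods suffices: one bundle contains fewer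
  than s goods.\<close>

definition set_agent :: "nat set \<Rightarrow> nat \<Rightarrow> nat" where
  "set_agent S g = of_bool (g \<in> S)"

lemma bundle_util_set_agent: "finite B \<Longrightarrow> bundle_util (set_agent S) B = card (S \<inter> B)"
  unfolding bundle_util_def set_agent_def by (simp add: sum.If_cases Int_commute Int_def)

lemma desired_set_agent: "S \<subseteq> G \<Longrightarrow> desired G (set_agent S) = S"
  unfolding desired_def set_agent_def by auto

lemma binary_agent_set_agent: "binary_agent G (set_agent S)"
  unfolding binary_agent_def set_agent_def by auto

lemma num_sat_map_set_agent:
  assumes "distinct xs" "finite B"
  shows "num_sat s (map set_agent xs) B = card {S \<in> set xs. s \<le> card (S \<inter> B)}"
proof -
  have "num_sat s (map set_agent xs) B = length (filter (\<lambda>S. s \<le> card (S \<inter> B)) xs)"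
    unfolding num_sat_def by (simp add: filter_map o_def bundle_util_set_agent[OF assms(2)])
  also have "\<dots> = card {S \<in> set xs. s \<le> card (S \<inter> B)}"
    using assms(1) by (simp add: distinct_length_filter Int_commute Collect_conj_eq)
  finally show ?thesis .
qed

definition subset_agents :: "nat \<Rightarrow> nat \<Rightarrow> (nat \<Rightarrow> nat) list" where
  "subset_agents m r =
     map set_agent (SOME xs. set xs = {S. S \<subseteq> {0..<m} \<and> card S = r} \<and> distinct xs)"

lemma subset_agents_enum:
  obtains xs where "distinct xs" "set xs = {S. S \<subseteq> {0..<m} \<and> card S = r}"
    and "subset_agents m r = map set_agent xs"
proof -
  let ?enum = "\<lambda>xs. set xs = {S. S \<subseteq> {0..<m} \<and> card S = r} \<and> distinct xs"
  have "finite {S. S \<subseteq> {0..<m} \<and> card S = r}"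
    by (rule finite_subset[of _ "Pow {0..<m}"]) auto
  then have "\<exists>xs. ?enum xs"
    by (rule finite_distinct_list)
  then have "?enum (SOME xs. ?enum xs)"
    by (rule someI_ex)
  then show ?thesis
    by (intro that[of "SOME xs. ?enum xs"]) (simp_all only: subset_agents_def)
qed

lemma length_subset_agents: "length (subset_agents m r) = m choose r"
proof -
  obtain xs where "distinct xs" "set xs = {S. S \<subseteq> {0..<m} \<and> card S = r}"
    and "subset_agents m r = map set_agent xs"
    by (rule subset_agents_enum)
  then show ?thesis using distinct_card n_subsets[of "{0..<m}" r] by fastforce
qed

lemma subset_agents_binary_desired:
  "u \<in> set (subset_agents m r) \<Longrightarrow> binary_agent {0..<m} u \<and> card (desired {0..<m} u) = r"
  by (rule subset_agents_enum[of m r]) (auto simp: binary_agent_set_agent desired_set_agent)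

lemma num_sat_subset_agents:
  assumes "B \<subseteq> {0..<m}"
  shows "num_sat s (subset_agents m r) B
       = card {S. S \<subseteq> {0..<m} \<and> card S = r \<and> s \<le> card (S \<inter> B)}"
proof -
  obtain xs where "distinct xs" "set xs = {S. S \<subseteq> {0..<m} \<and> card S = r}"
    and "subset_agents m r = map set_agent xs"
    by (rule subset_agents_enum)
  moreover have "finite B" using assms finite_subset by blast
  ultimately show ?thesis by (simp add: num_sat_map_set_agent Collect_conj_eq Int_assoc)
qed

lemma hard_instance:
  assumes "r \<le> m" "m < 2 * t"
    and small_fails: "\<And>B. B \<subseteq> {0..<m} \<Longrightarrow> card B < t \<Longrightarrow>
          real (num_sat s (subset_agents m r) B) < h * real (length (subset_agents m r))"
  shows "\<exists>(G :: nat set) (A1 :: (nat \<Rightarrow> nat) list) (A2 :: (nat \<Rightarrow> nat) list).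
           finite G \<and> length A1 \<ge> 1 \<and> length A2 \<ge> 1 \<and>
           (\<forall>u \<in> set A1 \<union> set A2. binary_agent G u \<and> card (desired G u) = r) \<and>
           \<not> (\<exists>G1 G2. is_allocation G G1 G2 \<and>
                 real (num_sat s A1 G1) \<ge> h * real (length A1) \<and>
                 real (num_sat s A2 G2) \<ge> h * real (length A2))"
proof -
  let ?A = "subset_agents m r"
  have no_allocation: "\<not> (\<exists>G1 G2. is_allocation {0..<m} G1 G2 \<and>
           real (num_sat s ?A G1) \<ge> h * real (length ?A) \<and>
           real (num_sat s ?A G2) \<ge> h * real (length ?A))"
  proof clarify
    fix G1 G2 assume alloc: "is_allocation {0..<m} G1 G2"
      and sat1: "h * real (length ?A) \<le> real (num_sat s ?A G1)"
      and sat2: "h * real (length ?A) \<le> real (num_sat s ?A G2)"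
    have sub: "G1 \<subseteq> {0..<m}" "G2 \<subseteq> {0..<m}" and disj: "G1 \<inter> G2 = {}"
      using alloc unfolding is_allocation_def by blast+
    have "card G1 + card G2 = card (G1 \<union> G2)"
      using disj finite_subset[OF sub(1)] finite_subset[OF sub(2)] by (simp add: card_Un_disjoint)
    also have "\<dots> = m"
      using alloc unfolding is_allocation_def by simp
    finally have "card G1 < t \<or> card G2 < t"
      using assms(2) by linarith
    then show False
    proof
      assume "card G1 < t"
      with small_fails[OF sub(1)] sat1 show False by linarith
    next
      assume "card G2 < t"
      with small_fails[OF sub(2)] sat2 show False by linarith
    qed
  qed
  have "length ?A \<ge> 1"
    using assms(1) by (simp add: length_subset_agents Suc_leI)
  with no_allocation subset_agents_binary_desired show ?thesis
    by (intro exI[of _ "{0..<m}"] exI[of _ ?A]) auto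
qed

lemma card_subsets_Int_eq:
  assumes "finite G" "H \<subseteq> G" "i \<le> r"
  shows "card {S. S \<subseteq> G \<and> card S = r \<and> card (S \<inter> H) = i}
       = (card H choose i) * (card (G - H) choose (r - i))"
proof -
  let ?X = "{A. A \<subseteq> H \<and> card A = i}" and ?Y = "{B. B \<subseteq> G - H \<and> card B = r - i}"
  have finH: "finite H" using assms(1,2) finite_subset by blast
  have inj: "inj_on (\<lambda>(A, B). A \<union> B) (?X \<times> ?Y)"
    by (rule inj_onI) (clarsimp, blast)
  have "{S. S \<subseteq> G \<and> card S = r \<and> card (S \<inter> H) = i} = (\<lambda>(A, B). A \<union> B) ` (?X \<times> ?Y)"
  proof (rule set_eqI, rule iffI)
    fix S assume S: "S \<in> {S. S \<subseteq> G \<and> card S = r \<and> card (S \<inter> H) = i}"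
    then have "finite S"
      using assms(1) finite_subset by blast
    then have "card S = card (S \<inter> H) + card (S - H)"
      by (rule card_Int_Diff)
    then have "card (S - H) = r - i" using S by auto
    moreover have "S = (S \<inter> H) \<union> (S - H)" by blast
    ultimately show "S \<in> (\<lambda>(A, B). A \<union> B) ` (?X \<times> ?Y)" using S
      by (intro image_eqI[of _ _ "(S \<inter> H, S - H)"]) auto
  next
    fix S assume "S \<in> (\<lambda>(A, B). A \<union> B) ` (?X \<times> ?Y)"
    then obtain A B where AB: "A \<subseteq> H" "card A = i" "B \<subseteq> G - H" "card B = r - i" "S = A \<union> B"
      by auto
    have "finite A" "finite B" using AB finH assms(1) finite_subset by blast+
    then have "card S = r" using AB card_Un_disjoint[of A B] assms(3) by auto
    moreover have "S \<inter> H = A" using AB by blast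
    ultimately show "S \<in> {S. S \<subseteq> G \<and> card S = r \<and> card (S \<inter> H) = i}" using AB assms(2) by auto
  qed
  then have "card {S. S \<subseteq> G \<and> card S = r \<and> card (S \<inter> H) = i} = card ?X * card ?Y"
    by (simp add: card_image[OF inj] card_cartesian_product)
  then show ?thesis
    using n_subsets[OF finH, of i] n_subsets[of "G - H" "r - i"] assms(1) by simp
qed

lemma card_subsets_Int_ge:
  assumes "finite G" "H \<subseteq> G"
  shows "card {S. S \<subseteq> G \<and> card S = r \<and> s \<le> card (S \<inter> H)}
       = (\<Sum>i=s..r. (card H choose i) * (card (G - H) choose (r - i)))"
proof -
  let ?layer = "\<lambda>i. {S. S \<subseteq> G \<and> card S = r \<and> card (S \<inter> H) = i}"
  have "card (S \<inter> H) \<le> card S" if "S \<subseteq> G" for S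
    using that assms(1) by (intro card_mono) (auto intro: finite_subset)
  then have "{S. S \<subseteq> G \<and> card S = r \<and> s \<le> card (S \<inter> H)} = (\<Union>i\<in>{s..r}. ?layer i)"
    by fastforce
  moreover have "finite (?layer i)" for i
    using assms(1) by (auto intro: finite_subset[of _ "Pow G"])
  ultimately have "card {S. S \<subseteq> G \<and> card S = r \<and> s \<le> card (S \<inter> H)} = (\<Sum>i=s..r. card (?layer i))"
    by (simp only:) (rule card_UN_disjoint; auto)
  also have "\<dots> = (\<Sum>i=s..r. (card H choose i) * (card (G - H) choose (r - i)))"
    by (rule sum.cong) (auto intro: card_subsets_Int_eq[OF assms])
  finally show ?thesis .
qed

lemma num_sat_subset_agents_le:
  assumes "B \<subseteq> {0..<2 * n}" "card B \<le> n"
  shows "num_sat s (subset_agents (2 * n) r) B \<le> (\<Sum>i=s..r. (n choose i) * (n choose (r - i)))"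
proof -
  let ?G = "{0..<2 * n}"
  obtain H where H: "B \<subseteq> H" "H \<subseteq> ?G" "card H = n"
    using exists_subset_between[of B n ?G] assms by auto
  have "card (?G - H) = n" using H by (simp add: card_Diff_subset finite_subset)
  have "num_sat s (subset_agents (2 * n) r) B
      = card {S. S \<subseteq> ?G \<and> card S = r \<and> s \<le> card (S \<inter> B)}"
    by (rule num_sat_subset_agents[OF assms(1)])
  also have "\<dots> \<le> card {S. S \<subseteq> ?G \<and> card S = r \<and> s \<le> card (S \<inter> H)}"
  proof (rule card_mono)
    show "finite {S. S \<subseteq> ?G \<and> card S = r \<and> s \<le> card (S \<inter> H)}"
      by (auto intro: finite_subset[of _ "Pow ?G"])
    have "card (S \<inter> B) \<le> card (S \<inter> H)" if "S \<subseteq> ?G" for S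
      using H that by (intro card_mono) (auto intro: finite_subset)
    then show "{S. S \<subseteq> ?G \<and> card S = r \<and> s \<le> card (S \<inter> B)}
             \<subseteq> {S. S \<subseteq> ?G \<and> card S = r \<and> s \<le> card (S \<inter> H)}"
      by (auto intro: le_trans)
  qed
  also have "\<dots> = (\<Sum>i=s..r. (n choose i) * (n choose (r - i)))"
    using card_subsets_Int_ge[OF _ H(2)] H(3) \<open>card (?G - H) = n\<close> by simp
  finally show ?thesis .
qed

text \<open>The fraction of r-subsets of 2n goods that meet a fixed n-set in at least s goods.\<close>

definition hypergeometric_tail :: "nat \<Rightarrow> nat \<Rightarrow> nat \<Rightarrow> real" where
  "hypergeometric_tail r s n =
     real (\<Sum>i=s..r. (n choose i) * (n choose (r - i))) / real ((2 * n) choose r)"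

lemma num_sat_subset_agents_less:
  assumes "r \<le> 2 * n" "hypergeometric_tail r s n < h" "B \<subseteq> {0..<2 * n}" "card B \<le> n"
  shows "real (num_sat s (subset_agents (2 * n) r) B) < h * real (length (subset_agents (2 * n) r))"
proof -
  have pos: "real (length (subset_agents (2 * n) r)) > 0"
    using assms(1) by (simp add: length_subset_agents zero_less_binomial)
  have "real (num_sat s (subset_agents (2 * n) r) B)
        \<le> real (\<Sum>i=s..r. (n choose i) * (n choose (r - i)))"
    using num_sat_subset_agents_le[OF assms(3,4)] by (rule of_nat_mono)
  also have "\<dots> = hypergeometric_tail r s n * real (length (subset_agents (2 * n) r))"
    using pos unfolding hypergeometric_tail_def length_subset_agents by simp
  also have "\<dots> < h * real (length (subset_agents (2 * n) r))"
    using assms(2) pos by (rule mult_strict_right_mono)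
  finally show ?thesis .
qed

lemma num_sat_eq_0_if_card_less:
  assumes "B \<subseteq> {0..<m}" "card B < s"
  shows "num_sat s (subset_agents m r) B = 0"
proof -
  have "\<not> s \<le> card (S \<inter> B)" for S
    using card_mono[of B "S \<inter> B"] finite_subset[OF assms(1)] assms(2) by auto
  then show ?thesis
    using assms(1) by (simp add: num_sat_subset_agents)
qed

lemma choose_over_power_tendsto:
  "(\<lambda>n. real (n choose k) / real n ^ k) \<longlonglongrightarrow> 1 / fact k"
proof -
  have eq: "real (n choose k) / real n ^ k = (\<Prod>j=0..<k. 1 - real j / real n) / fact k"
    if "n > 0" for n
  proof -
    have "(\<Prod>j=0..<k. 1 - real j / real n) = (\<Prod>j=0..<k. (real n - real j) / real n)"
      by (rule prod.cong) (use that in \<open>auto simp: field_simps\<close>)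
    then have "(\<Prod>j=0..<k. real n - real j) / real n ^ k = (\<Prod>j=0..<k. 1 - real j / real n)"
      by (simp add: prod_dividef)
    moreover have "real (n choose k) = (\<Prod>j=0..<k. real n - real j) / fact k"
      by (simp add: binomial_gbinomial gbinomial_prod_rev)
    ultimately show ?thesis by (simp add: field_simps)
  qed
  have "(\<lambda>n. (\<Prod>j=0..<k. 1 - real j / real n) / fact k) \<longlonglongrightarrow> (\<Prod>j=0..<k. 1 - 0) / fact k"
    by (intro tendsto_intros) auto
  then have "(\<lambda>n. (\<Prod>j=0..<k. 1 - real j / real n) / fact k) \<longlonglongrightarrow> 1 / fact k"
    by simp
  then show ?thesis
    by (rule Lim_transform_eventually) (auto simp: eq eventually_sequentially intro!: exI[of _ 1])
qed

lemma hypergeometric_tendsto_binomial: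
  assumes "i \<le> r"
  shows "(\<lambda>n. real (n choose i) * real (n choose (r - i)) / real ((2 * n) choose r))
     \<longlonglongrightarrow> real (r choose i) / 2 ^ r"
proof -
  have "(\<lambda>n. real ((2 * n) choose r) / real (2 * n) ^ r) \<longlonglongrightarrow> 1 / fact r"
    using LIMSEQ_subseq_LIMSEQ[OF choose_over_power_tendsto, of "\<lambda>n. 2 * n"]
    by (simp add: strict_mono_def o_def)
  then have "(\<lambda>n. 2 ^ r * (real ((2 * n) choose r) / real (2 * n) ^ r)) \<longlonglongrightarrow> 2 ^ r * (1 / fact r)"
    by (rule tendsto_mult_left)
  then have "(\<lambda>n. real ((2 * n) choose r) / real n ^ r) \<longlonglongrightarrow> 2 ^ r / fact r"
    by (simp add: power_mult_distrib)
  then have "(\<lambda>n. (real (n choose i) / real n ^ i) * (real (n choose (r - i)) / real n ^ (r - i))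
                / (real ((2 * n) choose r) / real n ^ r))
             \<longlonglongrightarrow> (1 / fact i) * (1 / fact (r - i)) / (2 ^ r / fact r)"
    by (rule tendsto_divide[OF tendsto_mult[OF choose_over_power_tendsto choose_over_power_tendsto]])
       simp
  also have "(1 / fact i) * (1 / fact (r - i)) / (2 ^ r / fact r) = real (r choose i) / (2::real) ^ r"
    using assms by (simp add: binomial_fact field_simps)
  finally have lim: "(\<lambda>n. (real (n choose i) / real n ^ i) * (real (n choose (r - i)) / real n ^ (r - i))
                / (real ((2 * n) choose r) / real n ^ r)) \<longlonglongrightarrow> real (r choose i) / 2 ^ r" .
  have "\<forall>\<^sub>F n in sequentially.
          (real (n choose i) / real n ^ i) * (real (n choose (r - i)) / real n ^ (r - i))
            / (real ((2 * n) choose r) / real n ^ r)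
          = real (n choose i) * real (n choose (r - i)) / real ((2 * n) choose r)"
  proof (rule eventually_sequentiallyI)
    fix n :: nat assume "1 \<le> n"
    moreover have "real n ^ i * real n ^ (r - i) = real n ^ r" using assms by (simp flip: power_add)
    ultimately show "(real (n choose i) / real n ^ i) * (real (n choose (r - i)) / real n ^ (r - i))
                       / (real ((2 * n) choose r) / real n ^ r)
                     = real (n choose i) * real (n choose (r - i)) / real ((2 * n) choose r)"
      by (simp add: field_simps)
  qed
  with lim show ?thesis
    by (rule Lim_transform_eventually)
qed

lemma hypergeometric_tail_tendsto:
  "hypergeometric_tail r s \<longlonglongrightarrow> (\<Sum>i=s..r. real (r choose i)) / 2 ^ r"
proof -
  have "(\<lambda>n. \<Sum>i=s..r. real (n choose i) * real (n choose (r - i)) / real ((2 * n) choose r))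
        \<longlonglongrightarrow> (\<Sum>i=s..r. real (r choose i) / 2 ^ r)"
    by (intro tendsto_sum hypergeometric_tendsto_binomial) auto
  moreover have "hypergeometric_tail r s
      = (\<lambda>n. \<Sum>i=s..r. real (n choose i) * real (n choose (r - i)) / real ((2 * n) choose r))"
    by (simp add: fun_eq_iff hypergeometric_tail_def sum_divide_distrib)
  ultimately show ?thesis
    by (simp add: sum_divide_distrib)
qed

theorem mainTheorem4:
  fixes r s :: nat and h :: real
  assumes "1 \<le> s" and "s \<le> r" and "h > MaxH r s"
  shows "\<exists>(G :: nat set) (A1 :: (nat \<Rightarrow> nat) list) (A2 :: (nat \<Rightarrow> nat) list).
           finite G \<and> length A1 \<ge> 1 \<and> length A2 \<ge> 1 \<and>
           (\<forall>u \<in> set A1 \<union> set A2. binary_agent G u \<and> card (desired G u) = r) \<and>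
           \<not> (\<exists>G1 G2. is_allocation G G1 G2 \<and>
                 real (num_sat s A1 G1) \<ge> h * real (length A1) \<and>
                 real (num_sat s A2 G2) \<ge> h * real (length A2))"
proof (cases "r \<le> 2 * s - 1")
  case True
  then have "h > 0" using assms(3) by (simp add: MaxH_def)
  moreover have "length (subset_agents r r) = 1" by (simp add: length_subset_agents)
  ultimately show ?thesis
    using True assms(1) by (intro hard_instance[of r r s]) (auto simp: num_sat_eq_0_if_card_less)
next
  case False
  then have "hypergeometric_tail r s \<longlonglongrightarrow> MaxH r s"
    using hypergeometric_tail_tendsto by (simp add: MaxH_def)
  then have "\<forall>\<^sub>F n in sequentially. hypergeometric_tail r s n < h"
    using assms(3) by (rule order_tendstoD)
  moreover have "\<forall>\<^sub>F n in sequentially. r \<le> 2 * n"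
    by (rule eventually_sequentiallyI[of r]) simp
  ultimately have "\<forall>\<^sub>F n in sequentially. hypergeometric_tail r s n < h \<and> r \<le> 2 * n"
    by (rule eventually_conj)
  then obtain n where n: "hypergeometric_tail r s n < h" "r \<le> 2 * n"
    using eventually_happens'[OF sequentially_bot] by blast
  show ?thesis
    using n num_sat_subset_agents_less[of r n s h]
    by (intro hard_instance[of r "2 * n" "n + 1"]) auto
qed

end
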